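(* Let $f:[0,\infty)\to[0,\infty)$ be such that there exists $C\ge1$ with $f(s)\le Cf(t)$ and $f(t)\frac{s}{t}\le C(f(s)+1)$ for all $t>s\ge0$. Then there exists $A\ge1$ such that for every $x\in(0,\infty)$, $A^{-1}F(x)-A\le f(x)\le F(x)$, where $F$ is the least concave majorant of $f$.
   Context: The least concave majorant $F$ of $f$ is the smallest concave function $F$ on $[0,\infty)$ with $f\le F$. *)

theory Defs
  imports "HOL-Analysis.Analysis"
begin

text \<open>The least concave majorant of f on [0,\<infinity>): the pointwise infimum of all
  concave functions on [0,\<infinity>) dominating f there (this infimum is itself concave,
  hence it is the smallest concave majorant).\<close>
definition least_concave_majorant :: "(real \<Rightarrow> real) \<Rightarrow> real \<Rightarrow> real" where
  "least_concave_majorant f x =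
     Inf {g x | g. concave_on {0..} g \<and> (\<forall>y\<ge>0. f y \<le> g y)}"

end

theory Submission
  imports Defs
begin

text \<open>Fix \<open>x > 0\<close> and put \<open>K = C (f x + 1)\<close>. The first hypothesis bounds \<open>f\<close> by \<open>K\<close> on
  \<open>[0, x]\<close>, the second bounds it by \<open>K y / x\<close> for \<open>y > x\<close>, so the affine function
  \<open>y \<mapsto> K (1 + y / x)\<close> is a concave majorant of \<open>f\<close>. Hence \<open>f x \<le> F x \<le> 2 K\<close>,
  and \<open>A = 2 C\<close> works.\<close>

lemma le_least_concave_majorant:
  assumes "concave_on {0..} g" and "\<And>y. y \<ge> 0 \<Longrightarrow> f y \<le> g y" and "x \<ge> 0"
  shows "f x \<le> least_concave_majorant f x"
  unfolding least_concave_majorant_def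
  using assms by (intro cInf_greatest) auto

lemma least_concave_majorant_le:
  assumes "concave_on {0..} g" and "\<And>y. y \<ge> 0 \<Longrightarrow> f y \<le> g y" and "x \<ge> 0"
  shows "least_concave_majorant f x \<le> g x"
  unfolding least_concave_majorant_def
proof (rule cInf_lower)
  show "g x \<in> {h x | h. concave_on {0..} h \<and> (\<forall>y\<ge>0. f y \<le> h y)}"
    using assms(1,2) by blast
  show "bdd_below {h x | h. concave_on {0..} h \<and> (\<forall>y\<ge>0. f y \<le> h y)}"
    using \<open>x \<ge> 0\<close> by (auto intro: bdd_belowI[of _ "f x"])
qed

lemma concave_on_affine:
  fixes K x :: real
  assumes "K \<ge> 0" and "x > 0"
  shows "concave_on {0..} (\<lambda>y. K * (1 + y / x))"
  using assms
  by (intro concave_on_cmul concave_on_add concave_on_cdiv)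
     (auto simp: concave_on_const concave_on_ident convex_real_interval)

lemma quasi_monotone_le_affine:
  fixes f :: "real \<Rightarrow> real"
  assumes x: "x > 0" and fx: "f x \<ge> 0" and C: "C \<ge> 1"
    and below: "\<And>s. 0 \<le> s \<Longrightarrow> s < x \<Longrightarrow> f s \<le> C * f x"
    and above: "\<And>t. x < t \<Longrightarrow> f t * (x / t) \<le> C * (f x + 1)"
    and y: "y \<ge> 0"
  shows "f y \<le> C * (f x + 1) * (1 + y / x)"
proof -
  define K where "K = C * (f x + 1)"
  have K: "K \<ge> 0" using C fx by (simp add: K_def)
  have "f y \<le> K * (1 + y / x)"
  proof (cases "y \<le> x")
    case True
    have "f x \<le> C * f x"
      using C fx by (simp add: mult_le_cancel_right1)
    then have "f y \<le> C * f x"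
      using below[of y] y True by (cases "y = x") auto
    also have "\<dots> \<le> K"
      using C by (simp add: K_def)
    also have "\<dots> \<le> K * (1 + y / x)"
      using K x y by (simp add: mult_le_cancel_left1)
    finally show ?thesis .
  next
    case False
    then have "f y \<le> K * (y / x)"
      using above[of y] x by (simp add: K_def field_simps)
    also have "\<dots> \<le> K * (1 + y / x)"
      using K by (intro mult_left_mono) auto
    finally show ?thesis .
  qed
  then show ?thesis by (simp add: K_def)
qed

theorem proposition2p23:
  fixes f :: "real \<Rightarrow> real" and C :: real
  assumes nonneg: "\<And>x. x \<ge> 0 \<Longrightarrow> f x \<ge> 0"
    and C: "C \<ge> 1"
    and h1: "\<And>s t. 0 \<le> s \<Longrightarrow> s < t \<Longrightarrow> f s \<le> C * f t"
    and h2: "\<And>s t. 0 \<le> s \<Longrightarrow> s < t \<Longrightarrow> f t * (s / t) \<le> C * (f s + 1)"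
  shows "\<exists>A\<ge>1. \<forall>x>0.
           least_concave_majorant f x / A - A \<le> f x \<and> f x \<le> least_concave_majorant f x"
proof (intro exI[of _ "2 * C"] conjI allI impI)
  show "1 \<le> 2 * C" using C by simp
  fix x :: real assume x: "x > 0"
  define g where "g = (\<lambda>y. C * (f x + 1) * (1 + y / x))"
  have fx: "f x \<ge> 0" using nonneg x by simp
  have concave: "concave_on {0..} g"
    unfolding g_def using C fx x by (intro concave_on_affine) simp_all
  have majorant: "f y \<le> g y" if "y \<ge> 0" for y
    unfolding g_def using x fx C h1 h2 that by (intro quasi_monotone_le_affine) auto
  show "f x \<le> least_concave_majorant f x"
    using le_least_concave_majorant[OF concave majorant] x by simp
  have "least_concave_majorant f x \<le> 2 * C * (f x + 1)"
    using least_concave_majorant_le[OF concave majorant, where x = x] x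
    by (simp add: g_def algebra_simps)
  then have "least_concave_majorant f x / (2 * C) \<le> f x + 1"
    using C by (simp add: divide_le_eq mult.commute)
  then show "least_concave_majorant f x / (2 * C) - 2 * C \<le> f x"
    using C by linarith
qed

end
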